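(* Let $\Omega$ be a plural type in which all operation symbols are binary, and let $\mathcal{V}_t$ be a variety satisfying $t(x,y)=x$ for some binary term $t$ in which both variables occur. Let $A=\bigsqcup_{s\in S}A_s$ be a semilattice sum of $\mathcal{V}_t$-algebras $A_s$ over the (meet) semilattice $S$, such that for each $s\in S$ and each $\star\in\Omega$ there is $e^\star_s\in A_s$ with $a\star e^\star_s=a$ for all $a\in A_s$. For $t\le s$ in $S$ and $\star\in\Omega$ define $\varphi^\star_{s,t}\colon A_s\to A_t$ by $\varphi^\star_{s,t}(a_s)=a_s\star e^\star_t$. Then $A$ satisfies $$(a_s\star b_t)\star e^\star_u=(a_s\star e^\star_u)\star(b_t\star e^\star_u)\quad\text{for all } s,t,u\in S \text{ with } u\le s,t,\ a_s\in A_s,\ b_t\in A_t,\ \star\in\Omega$$ if and only if $A$ is the strict Lallement sum of the subalgebras $A_s$ over $S$ given by the maps $\varphi^\star_{s,t}$.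
   Context: A semilattice sum of $\mathcal{V}_t$-algebras is an algebra $A$ with a congruence whose quotient $S$ is a semilattice (all basic operations become the semilattice meet $\cdot$) and whose classes $A_s$ ($s\in S$) are subalgebras lying in $\mathcal{V}_t$; then $a_s\star b_t\in A_{s\cdot t}$. Here $t\le s$ means $s\cdot t=t$. Strict Lallement sum: given a meet semilattice $S$, algebras $A_s$ ($s\in S$), and for each $\star\in\Omega$ and each pair $t\le s$ in $S$ a $\star$-homomorphism $\varphi^\star_{s,t}\colon(A_s,\star)\to(A_t,\star)$ such that (1) $\varphi^\star_{s,s}$ is the identity of $A_s$ and (2) for all $s,t\in S$, $u\le s\cdot t$, $a_s\in A_s$, $b_t\in A_t$: $\varphi^\star_{s\cdot t,u}\bigl(\varphi^\star_{s,s\cdot t}(a_s)\star\varphi^\star_{t,s\cdot t}(b_t)\bigr)=\varphi^\star_{s,u}(a_s)\star\varphi^\star_{t,u}(b_t)$, the strict Lallement sum is the disjoint union $\bigsqcup_{s\in S}A_s$ with operations $a_s\star b_t=\varphi^\star_{s,s\cdot t}(a_s)\star\varphi^\star_{t,s\cdot t}(b_t)$. "$A$ is the strict Lallement sum given by the maps $\varphi^\star_{s,t}$" means these maps satisfy (1)–(2) and the operations of $A$ are given by this formula. *)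

theory Defs
  imports Main
begin

definition closed_alg :: "'a set \<Rightarrow> 'o set \<Rightarrow> ('o \<Rightarrow> 'a \<Rightarrow> 'a \<Rightarrow> 'a) \<Rightarrow> bool" where
  "closed_alg A Omega op \<longleftrightarrow> (\<forall>f\<in>Omega. \<forall>a\<in>A. \<forall>b\<in>A. op f a b \<in> A)"

datatype 'o bterm = VarX | VarY | App 'o "'o bterm" "'o bterm"

fun bterm_eval :: "('o \<Rightarrow> 'a \<Rightarrow> 'a \<Rightarrow> 'a) \<Rightarrow> 'o bterm \<Rightarrow> 'a \<Rightarrow> 'a \<Rightarrow> 'a" where
  "bterm_eval op VarX x y = x"
| "bterm_eval op VarY x y = y"
| "bterm_eval op (App f t1 t2) x y = op f (bterm_eval op t1 x y) (bterm_eval op t2 x y)"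

fun bterm_ops :: "'o bterm \<Rightarrow> 'o set" where
  "bterm_ops VarX = {}"
| "bterm_ops VarY = {}"
| "bterm_ops (App f t1 t2) = insert f (bterm_ops t1 \<union> bterm_ops t2)"

fun occurs_x :: "'o bterm \<Rightarrow> bool" where
  "occurs_x VarX = True"
| "occurs_x VarY = False"
| "occurs_x (App f t1 t2) = (occurs_x t1 \<or> occurs_x t2)"

fun occurs_y :: "'o bterm \<Rightarrow> bool" where
  "occurs_y VarX = False"
| "occurs_y VarY = True"
| "occurs_y (App f t1 t2) = (occurs_y t1 \<or> occurs_y t2)"

definition binary_term_both_vars :: "'o set \<Rightarrow> 'o bterm \<Rightarrow> bool" where
  "binary_term_both_vars Omega t \<longleftrightarrow> bterm_ops t \<subseteq> Omega \<and> occurs_x t \<and> occurs_y t"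

definition satisfies_t_id :: "'a set \<Rightarrow> ('o \<Rightarrow> 'a \<Rightarrow> 'a \<Rightarrow> 'a) \<Rightarrow> 'o bterm \<Rightarrow> bool" where
  "satisfies_t_id B op t \<longleftrightarrow> (\<forall>x\<in>B. \<forall>y\<in>B. bterm_eval op t x y = x)"

definition meet_semilattice :: "'s set \<Rightarrow> ('s \<Rightarrow> 's \<Rightarrow> 's) \<Rightarrow> bool" where
  "meet_semilattice S m \<longleftrightarrow>
     (\<forall>s\<in>S. \<forall>t\<in>S. m s t \<in> S) \<and>
     (\<forall>s\<in>S. m s s = s) \<and>
     (\<forall>s\<in>S. \<forall>t\<in>S. m s t = m t s) \<and>
     (\<forall>s\<in>S. \<forall>t\<in>S. \<forall>u\<in>S. m (m s t) u = m s (m t u))"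

definition sl_le :: "('s \<Rightarrow> 's \<Rightarrow> 's) \<Rightarrow> 's \<Rightarrow> 's \<Rightarrow> bool" where
  "sl_le m t s \<longleftrightarrow> m s t = t"

definition fibre :: "'a set \<Rightarrow> ('a \<Rightarrow> 's) \<Rightarrow> 's \<Rightarrow> 'a set" where
  "fibre A pi s = {a\<in>A. pi a = s}"

text \<open>(A, op) is a semilattice sum over the meet semilattice (S, m) with respect to
the index map pi: pi maps A onto S, and its kernel is a congruence whose quotient is
S with every basic operation becoming the meet.\<close>
definition semilattice_sum ::
  "'a set \<Rightarrow> 'o set \<Rightarrow> ('o \<Rightarrow> 'a \<Rightarrow> 'a \<Rightarrow> 'a) \<Rightarrow> 's set \<Rightarrow> ('s \<Rightarrow> 's \<Rightarrow> 's) \<Rightarrow> ('a \<Rightarrow> 's) \<Rightarrow> bool" where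
  "semilattice_sum A Omega op S m pi \<longleftrightarrow>
     closed_alg A Omega op \<and> meet_semilattice S m \<and> pi ` A = S \<and>
     (\<forall>f\<in>Omega. \<forall>a\<in>A. \<forall>b\<in>A. pi (op f a b) = m (pi a) (pi b))"

definition strict_lallement_sum ::
  "'a set \<Rightarrow> 'o set \<Rightarrow> ('o \<Rightarrow> 'a \<Rightarrow> 'a \<Rightarrow> 'a) \<Rightarrow> 's set \<Rightarrow> ('s \<Rightarrow> 's \<Rightarrow> 's) \<Rightarrow> ('a \<Rightarrow> 's)
    \<Rightarrow> ('o \<Rightarrow> 's \<Rightarrow> 's \<Rightarrow> 'a \<Rightarrow> 'a) \<Rightarrow> bool" where
  "strict_lallement_sum A Omega op S m pi phi \<longleftrightarrow>
     \<comment> \<open>phi f s t is an f-homomorphism from A_s to A_t\<close>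
     (\<forall>f\<in>Omega. \<forall>s\<in>S. \<forall>t\<in>S. sl_le m t s \<longrightarrow>
        (\<forall>a\<in>fibre A pi s. phi f s t a \<in> fibre A pi t) \<and>
        (\<forall>a\<in>fibre A pi s. \<forall>b\<in>fibre A pi s. phi f s t (op f a b) = op f (phi f s t a) (phi f s t b))) \<and>
     \<comment> \<open>(1)\<close>
     (\<forall>f\<in>Omega. \<forall>s\<in>S. \<forall>a\<in>fibre A pi s. phi f s s a = a) \<and>
     \<comment> \<open>(2)\<close>
     (\<forall>f\<in>Omega. \<forall>s\<in>S. \<forall>t\<in>S. \<forall>u\<in>S. sl_le m u (m s t) \<longrightarrow>
        (\<forall>a\<in>fibre A pi s. \<forall>b\<in>fibre A pi t.
           phi f (m s t) u (op f (phi f s (m s t) a) (phi f t (m s t) b))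
             = op f (phi f s u a) (phi f t u b))) \<and>
     \<comment> \<open>operations of A are the Lallement operations\<close>
     (\<forall>f\<in>Omega. \<forall>s\<in>S. \<forall>t\<in>S. \<forall>a\<in>fibre A pi s. \<forall>b\<in>fibre A pi t.
        op f a b = op f (phi f s (m s t) a) (phi f t (m s t) b))"

end

theory Submission
  imports Defs
begin

text \<open>Put \<open>\<phi>\<^sub>s\<^sub>,\<^sub>u(a) = a \<star> e\<^sub>u\<close>. Taking \<open>u = s \<cdot> t\<close> in the identity and using that
  \<open>e\<^sub>s\<^sub>t\<close> is a right unit on \<open>A\<^sub>s\<^sub>t \<ni> a \<star> b\<close> gives the Lallement formula
  \<open>a \<star> b = \<phi>\<^sub>s\<^sub>,\<^sub>s\<^sub>t(a) \<star> \<phi>\<^sub>t\<^sub>,\<^sub>s\<^sub>t(b)\<close>; with it, the identity for smaller \<open>u\<close> is condition (2),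
  and for \<open>s = t\<close> it says that \<open>\<phi>\<^sub>s\<^sub>,\<^sub>u\<close> is a homomorphism. Conversely, in any strict
  Lallement sum, \<open>\<phi>\<^sub>s\<^sub>t\<^sub>,\<^sub>u(a \<star> b) = \<phi>\<^sub>s\<^sub>,\<^sub>u(a) \<star> \<phi>\<^sub>t\<^sub>,\<^sub>u(b)\<close> by the Lallement formula and (2).\<close>

lemma sl_le_refl:
  assumes "meet_semilattice S m" "s \<in> S"
  shows "sl_le m s s"
  using assms unfolding meet_semilattice_def sl_le_def by blast

lemma sl_le_meet_iff:
  assumes "meet_semilattice S m" "s \<in> S" "t \<in> S" "u \<in> S"
  shows "sl_le m u (m s t) \<longleftrightarrow> sl_le m u s \<and> sl_le m u t"
  using assms unfolding meet_semilattice_def sl_le_def by metis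

lemma sl_le_meet_lower:
  assumes "meet_semilattice S m" "s \<in> S" "t \<in> S"
  shows "sl_le m (m s t) s" "sl_le m (m s t) t"
proof -
  have "m s t \<in> S" using assms unfolding meet_semilattice_def by blast
  then show "sl_le m (m s t) s" "sl_le m (m s t) t"
    using sl_le_meet_iff[OF assms, of "m s t"] sl_le_refl[OF assms(1)] by blast+
qed

lemma semilattice_sum_op_in_fibre:
  assumes "semilattice_sum A Omega op S m pi" "f \<in> Omega"
    "a \<in> fibre A pi s" "b \<in> fibre A pi t"
  shows "op f a b \<in> fibre A pi (m s t)"
  using assms unfolding semilattice_sum_def closed_alg_def fibre_def by auto

lemma strict_lallement_sum_phi_op:
  assumes L: "strict_lallement_sum A Omega op S m pi phi" and sl: "meet_semilattice S m"
    and f: "f \<in> Omega" and S: "s \<in> S" "t \<in> S" "u \<in> S"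
    and le: "sl_le m u s" "sl_le m u t"
    and a: "a \<in> fibre A pi s" and b: "b \<in> fibre A pi t"
  shows "phi f (m s t) u (op f a b) = op f (phi f s u a) (phi f t u b)"
proof -
  have "op f a b = op f (phi f s (m s t) a) (phi f t (m s t) b)"
    using L f S a b unfolding strict_lallement_sum_def by blast
  moreover have "sl_le m u (m s t)"
    using sl_le_meet_iff[OF sl S] le by blast
  ultimately show ?thesis
    using L f S a b unfolding strict_lallement_sum_def by auto
qed

definition right_units_distribute ::
  "'a set \<Rightarrow> 'o set \<Rightarrow> ('o \<Rightarrow> 'a \<Rightarrow> 'a \<Rightarrow> 'a) \<Rightarrow> 's set \<Rightarrow> ('s \<Rightarrow> 's \<Rightarrow> 's) \<Rightarrow> ('a \<Rightarrow> 's)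
    \<Rightarrow> ('o \<Rightarrow> 's \<Rightarrow> 'a) \<Rightarrow> bool" where
  "right_units_distribute A Omega op S m pi e \<longleftrightarrow>
     (\<forall>f\<in>Omega. \<forall>s\<in>S. \<forall>t\<in>S. \<forall>u\<in>S. sl_le m u s \<and> sl_le m u t \<longrightarrow>
        (\<forall>a\<in>fibre A pi s. \<forall>b\<in>fibre A pi t.
           op f (op f a b) (e f u) = op f (op f a (e f u)) (op f b (e f u))))"

lemma right_units_distribute_if_strict_lallement_sum:
  assumes "meet_semilattice S m"
    and "strict_lallement_sum A Omega op S m pi (\<lambda>f s t a. op f a (e f t))"
  shows "right_units_distribute A Omega op S m pi e"
  unfolding right_units_distribute_def
  using strict_lallement_sum_phi_op[OF assms(2,1)] by blast

lemma semilattice_sum_op_eq_meet_units: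
  assumes sum: "semilattice_sum A Omega op S m pi"
    and e_unit: "\<forall>f\<in>Omega. \<forall>s\<in>S. \<forall>a\<in>fibre A pi s. op f a (e f s) = a"
    and distrib: "right_units_distribute A Omega op S m pi e"
    and f: "f \<in> Omega" and S: "s \<in> S" "t \<in> S"
    and a: "a \<in> fibre A pi s" and b: "b \<in> fibre A pi t"
  shows "op f a b = op f (op f a (e f (m s t))) (op f b (e f (m s t)))"
proof -
  have sl: "meet_semilattice S m" using sum unfolding semilattice_sum_def by blast
  then have st: "m s t \<in> S" using S unfolding meet_semilattice_def by blast
  have "op f a b = op f (op f a b) (e f (m s t))"
    using e_unit f st semilattice_sum_op_in_fibre[OF sum f a b] by simp
  also have "\<dots> = op f (op f a (e f (m s t))) (op f b (e f (m s t)))"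
    using distrib f S st a b sl_le_meet_lower[OF sl S]
    unfolding right_units_distribute_def by blast
  finally show ?thesis .
qed

lemma strict_lallement_sum_if_right_units_distribute:
  assumes sum: "semilattice_sum A Omega op S m pi"
    and e_in: "\<forall>f\<in>Omega. \<forall>s\<in>S. e f s \<in> fibre A pi s"
    and e_unit: "\<forall>f\<in>Omega. \<forall>s\<in>S. \<forall>a\<in>fibre A pi s. op f a (e f s) = a"
    and distrib: "right_units_distribute A Omega op S m pi e"
  shows "strict_lallement_sum A Omega op S m pi (\<lambda>f s t a. op f a (e f t))"
proof -
  have sl: "meet_semilattice S m" using sum unfolding semilattice_sum_def by blast
  note lallement = semilattice_sum_op_eq_meet_units[OF sum e_unit distrib]
  note distrib' = distrib[unfolded right_units_distribute_def, rule_format]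
  show ?thesis
    unfolding strict_lallement_sum_def
  proof (intro conjI ballI allI impI)
    fix f s t a assume "f \<in> Omega" "s \<in> S" "t \<in> S" "sl_le m t s" "a \<in> fibre A pi s"
    then show "op f a (e f t) \<in> fibre A pi t"
      using semilattice_sum_op_in_fibre[OF sum] e_in unfolding sl_le_def by metis
  next
    fix f s t a b assume "f \<in> Omega" "s \<in> S" "t \<in> S" "sl_le m t s"
      "a \<in> fibre A pi s" "b \<in> fibre A pi s"
    then show "op f (op f a b) (e f t) = op f (op f a (e f t)) (op f b (e f t))"
      using distrib' by blast
  next
    fix f s a assume "f \<in> Omega" "s \<in> S" "a \<in> fibre A pi s"
    then show "op f a (e f s) = a" using e_unit by blast
  next
    fix f s t u a b assume "f \<in> Omega" "s \<in> S" "t \<in> S" "u \<in> S" "sl_le m u (m s t)"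
      "a \<in> fibre A pi s" "b \<in> fibre A pi t"
    then show "op f (op f (op f a (e f (m s t))) (op f b (e f (m s t)))) (e f u)
        = op f (op f a (e f u)) (op f b (e f u))"
      using lallement distrib' sl_le_meet_iff[OF sl] by metis
  next
    fix f s t a b assume "f \<in> Omega" "s \<in> S" "t \<in> S" "a \<in> fibre A pi s" "b \<in> fibre A pi t"
    then show "op f a b = op f (op f a (e f (m s t))) (op f b (e f (m s t)))"
      using lallement by blast
  qed
qed

theorem theorem7p2:
  fixes A :: "'a set" and Omega :: "'o set" and op :: "'o \<Rightarrow> 'a \<Rightarrow> 'a \<Rightarrow> 'a"
    and S :: "'s set" and m :: "'s \<Rightarrow> 's \<Rightarrow> 's" and pi :: "'a \<Rightarrow> 's"
    and t :: "'o bterm" and e :: "'o \<Rightarrow> 's \<Rightarrow> 'a"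
  assumes sum: "semilattice_sum A Omega op S m pi"
    and t_term: "binary_term_both_vars Omega t"
    and Vt: "\<forall>s\<in>S. satisfies_t_id (fibre A pi s) op t"
    and e_in: "\<forall>f\<in>Omega. \<forall>s\<in>S. e f s \<in> fibre A pi s"
    and e_unit: "\<forall>f\<in>Omega. \<forall>s\<in>S. \<forall>a\<in>fibre A pi s. op f a (e f s) = a"
  shows "(\<forall>f\<in>Omega. \<forall>s\<in>S. \<forall>t\<in>S. \<forall>u\<in>S. sl_le m u s \<and> sl_le m u t \<longrightarrow>
            (\<forall>a\<in>fibre A pi s. \<forall>b\<in>fibre A pi t.
               op f (op f a b) (e f u) = op f (op f a (e f u)) (op f b (e f u))))
         \<longleftrightarrow> strict_lallement_sum A Omega op S m pi (\<lambda>f s t a. op f a (e f t))"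
proof -
  have "meet_semilattice S m" using sum unfolding semilattice_sum_def by blast
  then show ?thesis
    using strict_lallement_sum_if_right_units_distribute[OF sum e_in e_unit]
      right_units_distribute_if_strict_lallement_sum
    unfolding right_units_distribute_def by blast
qed

end
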